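(* The On-CT-RSD mechanism is not universally friendship-truthful: there is an instance (with friendship graph of maximum degree $1$) and a realization of the mechanism's random choices under which some agent obtains strictly higher utility by declaring as her friend an agent who is not her friend than by reporting truthfully.
   Context: Instance: agents $N$, $n=|N|$ plots $\mathcal V$, undirected plot graph $(\mathcal V,\mathcal E)$, valuations $u_i:\mathcal V\to[0,1]\cap\mathbb Q$, reciprocal directed friendship relation $F$ with weights $\phi_{i,j}\ge0$. For an allocation (bijection) $A:N\to\mathcal V$, $U_i(A)=u_i(A(i))+\sum_{(i,j)\in F}\phi_{i,j}\mathbb I(\{A(i),A(j)\}\in\mathcal E)$. On-CT-RSD: repeatedly a uniformly random agent among those who have not yet picked is selected; she picks an available plot and may declare another not-yet-picked agent as her friend, in which case that agent picks an available plot next (without declaring a friend); this continues until all agents have plots; agents choose plots to maximize their utility. A randomized mechanism is universally friendship-truthful if, for every choice of its random bits (even if known to the agents), no agent can increase her utility by misreporting friendship information, regardless of what other agents report and which plots they pick. *)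

theory Defs
  imports Complex_Main
begin

text \<open>An instance: agents N, plots V, plot graph edges E (2-element subsets of V),
  valuations u, friendship relation F (pairs (i,j)), weights phi.\<close>

definition valid_instance ::
  "'a set \<Rightarrow> 'v set \<Rightarrow> 'v set set \<Rightarrow> ('a \<Rightarrow> 'v \<Rightarrow> real) \<Rightarrow> ('a \<times> 'a) set
    \<Rightarrow> ('a \<Rightarrow> 'a \<Rightarrow> real) \<Rightarrow> bool" where
  "valid_instance N V E u F phi \<longleftrightarrow>
     finite N \<and> finite V \<and> card V = card N \<and>
     (\<forall>e\<in>E. e \<subseteq> V \<and> card e = 2) \<and>
     (\<forall>a\<in>N. \<forall>v\<in>V. u a v \<in> \<rat> \<and> 0 \<le> u a v \<and> u a v \<le> 1) \<and>
     F \<subseteq> N \<times> N \<and> (\<forall>a. (a, a) \<notin> F) \<and>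
     (\<forall>a b. (a, b) \<in> F \<longrightarrow> (b, a) \<in> F) \<and>
     (\<forall>(a, b)\<in>F. 0 \<le> phi a b)"

definition max_degree_le_one :: "('a \<times> 'a) set \<Rightarrow> bool" where
  "max_degree_le_one F \<longleftrightarrow> (\<forall>a. card {b. (a, b) \<in> F} \<le> 1)"

definition utility ::
  "'v set set \<Rightarrow> ('a \<Rightarrow> 'v \<Rightarrow> real) \<Rightarrow> ('a \<times> 'a) set \<Rightarrow> ('a \<Rightarrow> 'a \<Rightarrow> real)
    \<Rightarrow> 'a \<Rightarrow> ('a \<Rightarrow> 'v) \<Rightarrow> real" where
  "utility E u F phi i A =
     u i (A i) + (\<Sum>j\<in>{j. (i, j) \<in> F}. phi i j * (if {A i, A j} \<in> E then 1 else 0))"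

definition partial_value ::
  "'v set set \<Rightarrow> ('a \<Rightarrow> 'v \<Rightarrow> real) \<Rightarrow> ('a \<times> 'a) set \<Rightarrow> ('a \<Rightarrow> 'a \<Rightarrow> real)
    \<Rightarrow> 'a \<Rightarrow> ('a \<rightharpoonup> 'v) \<Rightarrow> 'v \<Rightarrow> real" where
  "partial_value E u F phi a P v =
     u a v + (\<Sum>j\<in>{j. (a, j) \<in> F \<and> j \<in> dom P}.
                 phi a j * (if {v, the (P j)} \<in> E then 1 else 0))"

definition best_choice ::
  "'v set \<Rightarrow> 'v set set \<Rightarrow> ('a \<Rightarrow> 'v \<Rightarrow> real) \<Rightarrow> ('a \<times> 'a) set \<Rightarrow> ('a \<Rightarrow> 'a \<Rightarrow> real)
    \<Rightarrow> 'a \<Rightarrow> ('a \<rightharpoonup> 'v) \<Rightarrow> 'v \<Rightarrow> bool" where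
  "best_choice V E u F phi a P v \<longleftrightarrow>
     v \<in> V - ran P \<and>
     (\<forall>w\<in>V - ran P. partial_value E u F phi a P w \<le> partial_value E u F phi a P v)"

text \<open>The agent forced to pick next after agent a picked (a declared friend
  that has not yet picked), if any.\<close>

definition forced_next :: "'a set \<Rightarrow> 'a set \<Rightarrow> 'a option \<Rightarrow> 'a option" where
  "forced_next N picked t =
     (case t of None \<Rightarrow> None | Some b \<Rightarrow> if b \<in> N \<and> b \<notin> picked then Some b else None)"

text \<open>Runs of the mechanism for a fixed realization of the random bits, given by a
  priority list sigma (a uniformly random permutation of N): whenever a uniformly random
  not-yet-picked agent is to be selected, the first not-yet-picked agent of sigma is
  selected. d a is the friend agent a declares when she is selected (None = no
  declaration). States: partial allocation and the agent forced to pick next.\<close>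

inductive reach ::
  "'a set \<Rightarrow> 'v set \<Rightarrow> 'v set set \<Rightarrow> ('a \<Rightarrow> 'v \<Rightarrow> real) \<Rightarrow> ('a \<times> 'a) set
    \<Rightarrow> ('a \<Rightarrow> 'a \<Rightarrow> real) \<Rightarrow> 'a list \<Rightarrow> ('a \<Rightarrow> 'a option)
    \<Rightarrow> ('a \<rightharpoonup> 'v) \<Rightarrow> 'a option \<Rightarrow> bool"
  for N V E u F phi sigma d where
  init: "reach N V E u F phi sigma d Map.empty None"
| select: "reach N V E u F phi sigma d P None \<Longrightarrow> dom P \<noteq> N \<Longrightarrow>
     a = hd (filter (\<lambda>x. x \<notin> dom P) sigma) \<Longrightarrow>
     best_choice V E u F phi a P v \<Longrightarrow>
     reach N V E u F phi sigma d (P(a \<mapsto> v)) (forced_next N (insert a (dom P)) (d a))"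
| forced: "reach N V E u F phi sigma d P (Some b) \<Longrightarrow>
     best_choice V E u F phi b P v \<Longrightarrow>
     reach N V E u F phi sigma d (P(b \<mapsto> v)) None"

definition mech_outcome ::
  "'a set \<Rightarrow> 'v set \<Rightarrow> 'v set set \<Rightarrow> ('a \<Rightarrow> 'v \<Rightarrow> real) \<Rightarrow> ('a \<times> 'a) set
    \<Rightarrow> ('a \<Rightarrow> 'a \<Rightarrow> real) \<Rightarrow> 'a list \<Rightarrow> ('a \<Rightarrow> 'a option) \<Rightarrow> ('a \<Rightarrow> 'v) \<Rightarrow> bool" where
  "mech_outcome N V E u F phi sigma d A \<longleftrightarrow>
     (\<exists>P. reach N V E u F phi sigma d P None \<and> dom P = N \<and> (\<forall>a\<in>N. P a = Some (A a)))"

definition truthful_decl :: "('a \<times> 'a) set \<Rightarrow> 'a \<Rightarrow> 'a option \<Rightarrow> bool" where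
  "truthful_decl F a t \<longleftrightarrow> t = None \<or> (\<exists>b. t = Some b \<and> (a, b) \<in> F)"

end

theory Submission
  imports Defs
begin

text \<open>Take three agents 0, 1, 2 and three plots 0, 1, 2 whose only edge is {0, 1};
  agents 0 and 1 are friends with weight 1/2. Agent 0 values plot 0, while
  agents 1 and 2 both value plot 2 more than any friendship bonus. With priority order
  0, 1, 2 agent 0 takes plot 0, and whether or not she declares agent 1, agent 1 moves
  next and takes plot 2, so agent 0 gets no bonus. If agent 0 instead declares the
  stranger 2, then agent 2 takes plot 2 and agent 1 is left with plot 1, adjacent to
  agent 0.\<close>

lemma reach_select_undeclared:
  assumes "reach N V E u F phi sigma d P None" "a \<in> N" "a \<notin> dom P"
    "a = hd (filter (\<lambda>x. x \<notin> dom P) sigma)" "best_choice V E u F phi a P v" "d a = None"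
  shows "reach N V E u F phi sigma d (P(a \<mapsto> v)) None"
proof -
  from assms(2,3) have "dom P \<noteq> N" by blast
  from reach.select[OF assms(1) this assms(4,5)] assms(6) show ?thesis
    by (simp add: forced_next_def)
qed

lemma reach_select_declared:
  assumes "reach N V E u F phi sigma d P None" "a \<in> N" "a \<notin> dom P"
    "a = hd (filter (\<lambda>x. x \<notin> dom P) sigma)" "best_choice V E u F phi a P v"
    "d a = Some b" "b \<in> N" "b \<noteq> a" "b \<notin> dom P"
  shows "reach N V E u F phi sigma d (P(a \<mapsto> v)) (Some b)"
proof -
  from assms(2,3) have "dom P \<noteq> N" by blast
  from reach.select[OF assms(1) this assms(4,5)] assms(6-9) show ?thesis
    by (simp add: forced_next_def)
qed

lemma best_choice_single_free:
  assumes "V - ran P = {w}"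
  shows "best_choice V E u F phi a P v \<longleftrightarrow> v = w"
  using assms by (auto simp: best_choice_def)

definition ex_agents :: "nat set" where
  "ex_agents = {0, 1, 2}"

definition ex_edges :: "nat set set" where
  "ex_edges = {{0, 1}}"

definition ex_value :: "nat \<Rightarrow> nat \<Rightarrow> real" where
  "ex_value a v = (if a = 0 then of_bool (v = 0) else of_bool (v = 2))"

definition ex_friends :: "(nat \<times> nat) set" where
  "ex_friends = {(0, 1), (1, 0)}"

definition ex_weight :: "nat \<Rightarrow> nat \<Rightarrow> real" where
  "ex_weight a b = 1 / 2"

definition ex_order :: "nat list" where
  "ex_order = [0, 1, 2]"

abbreviation ex_reach :: "(nat \<Rightarrow> nat option) \<Rightarrow> (nat \<rightharpoonup> nat) \<Rightarrow> nat option \<Rightarrow> bool" where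
  "ex_reach \<equiv> reach ex_agents ex_agents ex_edges ex_value ex_friends ex_weight ex_order"

abbreviation ex_outcome :: "(nat \<Rightarrow> nat option) \<Rightarrow> (nat \<Rightarrow> nat) \<Rightarrow> bool" where
  "ex_outcome \<equiv> mech_outcome ex_agents ex_agents ex_edges ex_value ex_friends ex_weight ex_order"

abbreviation ex_best :: "nat \<Rightarrow> (nat \<rightharpoonup> nat) \<Rightarrow> nat \<Rightarrow> bool" where
  "ex_best \<equiv> best_choice ex_agents ex_edges ex_value ex_friends ex_weight"

abbreviation ex_utility :: "nat \<Rightarrow> (nat \<Rightarrow> nat) \<Rightarrow> real" where
  "ex_utility \<equiv> utility ex_edges ex_value ex_friends ex_weight"

lemma ex_friends_of: "{j. (a, j) \<in> ex_friends} = (if a = 0 then {1} else if a = 1 then {0} else {})"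
  by (auto simp: ex_friends_def)

lemma ex_valid_instance: "valid_instance ex_agents ex_agents ex_edges ex_value ex_friends ex_weight"
  by (auto simp: valid_instance_def ex_agents_def ex_edges_def ex_value_def ex_friends_def ex_weight_def)

lemma ex_max_degree_le_one: "max_degree_le_one ex_friends"
  by (simp add: max_degree_le_one_def ex_friends_of)

lemma ex_best_0_first: "ex_best 0 Map.empty v \<longleftrightarrow> v = 0"
  by (auto simp: best_choice_def partial_value_def ex_agents_def ex_value_def)

lemma ex_best_1_after_0: "ex_best 1 [0 \<mapsto> 0] v \<longleftrightarrow> v = 2"
  by (auto simp: best_choice_def partial_value_def ex_agents_def ex_value_def ex_edges_def
      ex_friends_def ex_weight_def doubleton_eq_iff)

lemma ex_best_2_after_0: "ex_best 2 [0 \<mapsto> 0] v \<longleftrightarrow> v = 2"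
  by (auto simp: best_choice_def partial_value_def ex_agents_def ex_value_def ex_friends_def)

lemma ex_best_2_last: "ex_best 2 [0 \<mapsto> 0, 1 \<mapsto> 2] v \<longleftrightarrow> v = 1"
  by (rule best_choice_single_free) (auto simp: ex_agents_def)

lemma ex_best_1_last: "ex_best 1 [0 \<mapsto> 0, 2 \<mapsto> 2] v \<longleftrightarrow> v = 1"
  by (rule best_choice_single_free) (auto simp: ex_agents_def)

lemma ex_outcome_misreport: "ex_outcome ((\<lambda>_. None)(0 := Some 2)) id"
proof -
  let ?d = "((\<lambda>_. None)(0 := Some 2)) :: nat \<Rightarrow> nat option"
  have "ex_reach ?d [0 \<mapsto> 0] (Some 2)"
    by (rule reach_select_declared[OF reach.init _ _ _ ex_best_0_first[THEN iffD2, OF refl]])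
      (simp_all add: ex_agents_def ex_order_def)
  then have "ex_reach ?d [0 \<mapsto> 0, 2 \<mapsto> 2] None"
    by (rule reach.forced) (simp add: ex_best_2_after_0)
  then have "ex_reach ?d [0 \<mapsto> 0, 2 \<mapsto> 2, 1 \<mapsto> 1] None"
    by (rule reach_select_undeclared[OF _ _ _ _ ex_best_1_last[THEN iffD2, OF refl]])
      (simp_all add: ex_agents_def ex_order_def)
  then show ?thesis
    unfolding mech_outcome_def by (intro exI[of _ "[0 \<mapsto> 0, 2 \<mapsto> 2, 1 \<mapsto> 1]"]) (auto simp: ex_agents_def)
qed

lemma ex_outcome_undeclared: "ex_outcome (\<lambda>_. None) (id(1 := 2, 2 := 1))"
proof -
  have "ex_reach (\<lambda>_. None) [0 \<mapsto> 0] None"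
    by (rule reach_select_undeclared[OF reach.init _ _ _ ex_best_0_first[THEN iffD2, OF refl]])
      (simp_all add: ex_agents_def ex_order_def)
  then have "ex_reach (\<lambda>_. None) [0 \<mapsto> 0, 1 \<mapsto> 2] None"
    by (rule reach_select_undeclared[OF _ _ _ _ ex_best_1_after_0[THEN iffD2, OF refl]])
      (simp_all add: ex_agents_def ex_order_def)
  then have "ex_reach (\<lambda>_. None) [0 \<mapsto> 0, 1 \<mapsto> 2, 2 \<mapsto> 1] None"
    by (rule reach_select_undeclared[OF _ _ _ _ ex_best_2_last[THEN iffD2, OF refl]])
      (simp_all add: ex_agents_def ex_order_def)
  then show ?thesis
    unfolding mech_outcome_def by (intro exI[of _ "[0 \<mapsto> 0, 1 \<mapsto> 2, 2 \<mapsto> 1]"]) (auto simp: ex_agents_def)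
qed

text \<open>Declaring the true friend 1 only makes agent 1 move next, which she does anyway.\<close>

lemma ex_reach_truthful:
  assumes "ex_reach ((\<lambda>_. None)(0 := t)) P s" "t = None \<or> t = Some 1"
  shows "(P = Map.empty \<and> s = None) \<or> (P = [0 \<mapsto> 0] \<and> s = t) \<or>
    (P = [0 \<mapsto> 0, 1 \<mapsto> 2] \<and> s = None) \<or> (P = [0 \<mapsto> 0, 1 \<mapsto> 2, 2 \<mapsto> 1] \<and> s = None)"
  using assms
proof (induction rule: reach.induct)
  case init
  then show ?case by simp
next
  case (select P a v)
  from select.IH[OF select.prems] consider "P = Map.empty" | "P = [0 \<mapsto> 0]"
    | "P = [0 \<mapsto> 0, 1 \<mapsto> 2]" | "P = [0 \<mapsto> 0, 1 \<mapsto> 2, 2 \<mapsto> 1]"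
    by blast
  then show ?case
  proof cases
    case 1
    with select.hyps(3,4) have "a = 0" "v = 0"
      by (simp_all add: ex_order_def ex_best_0_first)
    with 1 select.prems show ?thesis
      by (auto simp: forced_next_def ex_agents_def)
  next
    case 2
    with select.hyps(3) have "a = 1" by (simp add: ex_order_def)
    have "v = 2" using select.hyps(4) unfolding 2 \<open>a = 1\<close> ex_best_1_after_0 .
    with 2 \<open>a = 1\<close> have "P(a \<mapsto> v) = [0 \<mapsto> 0, 1 \<mapsto> 2]" by simp
    moreover have "forced_next ex_agents (insert a (dom P)) (((\<lambda>_. None)(0 := t)) a) = None"
      using \<open>a = 1\<close> by (simp add: forced_next_def)
    ultimately show ?thesis by blast
  next
    case 3
    with select.hyps(3) have "a = 2" by (simp add: ex_order_def)
    have "v = 1" using select.hyps(4) unfolding 3 \<open>a = 2\<close> ex_best_2_last .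
    with 3 \<open>a = 2\<close> have "P(a \<mapsto> v) = [0 \<mapsto> 0, 1 \<mapsto> 2, 2 \<mapsto> 1]" by simp
    moreover have "forced_next ex_agents (insert a (dom P)) (((\<lambda>_. None)(0 := t)) a) = None"
      using \<open>a = 2\<close> by (simp add: forced_next_def)
    ultimately show ?thesis by blast
  next
    case 4
    then have "dom P = ex_agents" by (auto simp: ex_agents_def)
    with select.hyps(2) show ?thesis by contradiction
  qed
next
  case (forced P b v)
  then have P: "P = [0 \<mapsto> 0]" and b: "b = 1" by auto
  have "v = 2" using forced.hyps(2) unfolding P b ex_best_1_after_0 .
  with P b have "P(b \<mapsto> v) = [0 \<mapsto> 0, 1 \<mapsto> 2]" by simp
  then show ?case by blast
qed

lemma ex_outcome_truthful:
  assumes "truthful_decl ex_friends 0 t" "ex_outcome ((\<lambda>_. None)(0 := t)) A"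
  shows "A 0 = 0" "A 1 = 2"
proof -
  have t: "t = None \<or> t = Some 1"
    using assms(1) by (auto simp: truthful_decl_def ex_friends_def)
  obtain P where P: "ex_reach ((\<lambda>_. None)(0 := t)) P None" "dom P = ex_agents"
    "\<forall>a\<in>ex_agents. P a = Some (A a)"
    using assms(2) unfolding mech_outcome_def by blast
  have "P = [0 \<mapsto> 0, 1 \<mapsto> 2, 2 \<mapsto> 1]"
    using ex_reach_truthful[OF P(1) t] P(2) t by (auto simp: ex_agents_def)
  with P(3) show "A 0 = 0" "A 1 = 2" by (auto simp: ex_agents_def)
qed

lemma ex_utility_0: "ex_utility 0 A = of_bool (A 0 = 0) + of_bool ({A 0, A 1} = {0, 1}) / 2"
  by (simp add: utility_def ex_friends_of ex_value_def ex_weight_def ex_edges_def)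

theorem proposition4p5:
  shows "\<exists>(N :: nat set) (V :: nat set) E u F phi sigma d i k A'.
     valid_instance N V E u F phi \<and> max_degree_le_one F \<and>
     distinct sigma \<and> set sigma = N \<and>
     (\<forall>a. truthful_decl F a (d a)) \<and>
     i \<in> N \<and> k \<in> N \<and> k \<noteq> i \<and> (i, k) \<notin> F \<and>
     mech_outcome N V E u F phi sigma (d(i := Some k)) A' \<and>
     (\<exists>A0. mech_outcome N V E u F phi sigma d A0) \<and>
     (\<forall>t A. truthful_decl F i t \<longrightarrow> mech_outcome N V E u F phi sigma (d(i := t)) A \<longrightarrow>
        utility E u F phi i A < utility E u F phi i A')"
proof -
  have "ex_utility 0 A < ex_utility 0 id"
    if "truthful_decl ex_friends 0 t" "ex_outcome ((\<lambda>_. None)(0 := t)) A" for t A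
    using ex_outcome_truthful[OF that] by (simp add: ex_utility_0 doubleton_eq_iff)
  then show ?thesis
    using ex_valid_instance ex_max_degree_le_one ex_outcome_misreport ex_outcome_undeclared
    by (intro exI[of _ ex_agents] exI[of _ ex_agents] exI[of _ ex_edges] exI[of _ ex_value]
        exI[of _ ex_friends] exI[of _ ex_weight] exI[of _ ex_order] exI[of _ "\<lambda>_. None"]
        exI[of _ 0] exI[of _ 2] exI[of _ id])
      (auto simp: ex_order_def ex_agents_def ex_friends_def truthful_decl_def)
qed

end
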